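(* Let $n\ge 1$ be an integer and let $a,b,c:\{0,1,\dots,n+1\}\to\mathbb{R}$ with $a(k)\neq 0$ and $c(k)\neq 0$ for $k=0,\dots,n$. Let $\Phi_{a,b,c},\Psi_{a,b,c}:\{0,\dots,n+1\}\to\mathbb{R}$ be the unique solutions of the homogeneous equation $$-a(k)u(k+1)+b(k)u(k)-c(k-1)u(k-1)=0,\qquad k=1,\dots,n,$$ determined respectively by $\Phi_{a,b,c}(0)=a(0)$, $\Phi_{a,b,c}(1)=b(0)$, and by $\Psi_{a,b,c}(n)=b(n+1)$, $\Psi_{a,b,c}(n+1)=c(n)$. Then for every $k=0,\dots,n+1$, $$\Phi_{a,b,c}(k)=a(0)\Big(\prod_{s=0}^{k-1}a(s)\Big)^{-1}\Phi_{\mathsf J}(k),\qquad \Psi_{a,b,c}(k)=c(n)\Big(\prod_{s=k}^{n}c(s)\Big)^{-1}\Psi_{\mathsf J}(k),$$ and moreover $$b(0)\Psi_{a,b,c}(0)-a(0)\Psi_{a,b,c}(1)=D_{\mathsf J}\Big(\prod_{s=0}^{n-1}c(s)\Big)^{-1}.$$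
   Context: Empty products equal $1$ and empty sums equal $0$. For $m\in\mathbb{N}$ and a sequence $x$, the shift $x_m$ is $x_m(j)=x(j+m)$; $ac$ denotes the pointwise product $(ac)(j)=a(j)c(j)$. Chebyshev functions: for sequences $x,y$ set $P_{-1}(x,y)=0$, $P_0(x,y)=1$, and for $k\ge1$ $$P_k(x,y)=\sum_{m=0}^{\lfloor k/2\rfloor}(-1)^m\sum_{\alpha\in\ell_k^m}x^{\bar\alpha}y^{\alpha},$$ where: for $\alpha=(\alpha_1,\dots,\alpha_k)\in\{0,1\}^k$, $x^\alpha=\prod_{j=1}^k x(j)^{\alpha_j}$ and $|\alpha|=\sum_j\alpha_j$; $\ell_k^0=\{(0,\dots,0)\}$; for $m\ge1$, $\ell_k^m$ is the set of $\alpha\in\{0,1\}^k$ with $\alpha_k=0$, $|\alpha|=m$, and whose positions of ones $i_1<\dots<i_m$ satisfy $i_{j+1}-i_j\ge2$ for $j=1,\dots,m-1$; and $\bar\alpha\in\{0,1\}^k$ is defined by $\bar\alpha_{i_j}=\bar\alpha_{i_j+1}=0$ for $j=1,\dots,m$ and $\bar\alpha_i=1$ otherwise. Define $\Phi_{\mathsf J}(0)=1$, $\Phi_{\mathsf J}(k)=b(0)P_{k-1}(b,ac)-a(0)c(0)P_{k-2}(b_1,a_1c_1)$ for $k=1,\dots,n+1$; $\Psi_{\mathsf J}(k)=b(n+1)P_{n-k}(b_k,a_kc_k)-a(n)c(n)P_{n-k-1}(b_k,a_kc_k)$ for $k=0,\dots,n$, and $\Psi_{\mathsf J}(n+1)=1$;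 $D_{\mathsf J}=b(0)\big[b(n+1)P_n(b,ac)-a(n)c(n)P_{n-1}(b,ac)\big]-a(0)c(0)\big[b(n+1)P_{n-1}(b_1,a_1c_1)-a(n)c(n)P_{n-2}(b_1,a_1c_1)\big]$. *)

theory Defs
  imports Complex_Main
begin

text \<open>Sequences are functions nat \<Rightarrow> real. A multi-index \<alpha> in {0,1}^k is represented
  by the set of positions of its ones, a subset of {1..k}.\<close>

definition shiftseq :: "nat \<Rightarrow> (nat \<Rightarrow> real) \<Rightarrow> nat \<Rightarrow> real" where
  "shiftseq m x = (\<lambda>j. x (j + m))"

definition pmult :: "(nat \<Rightarrow> real) \<Rightarrow> (nat \<Rightarrow> real) \<Rightarrow> nat \<Rightarrow> real" where
  "pmult a c = (\<lambda>j. a j * c j)"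

definition ell :: "nat \<Rightarrow> nat \<Rightarrow> nat set set" where
  "ell k m = {S. S \<subseteq> {1..k} \<and> k \<notin> S \<and> card S = m \<and>
                 (\<forall>i\<in>S. \<forall>j\<in>S. i < j \<longrightarrow> j - i \<ge> 2)}"

definition barpos :: "nat \<Rightarrow> nat set \<Rightarrow> nat set" where
  "barpos k S = {1..k} - (S \<union> Suc ` S)"

definition chebP :: "int \<Rightarrow> (nat \<Rightarrow> real) \<Rightarrow> (nat \<Rightarrow> real) \<Rightarrow> real" where
  "chebP k x y =
     (if k = -1 then 0
      else if k = 0 then 1
      else if k < 0 then 0
      else (\<Sum>m = 0..nat k div 2. (-1) ^ m *
              (\<Sum>S\<in>ell (nat k) m. (\<Prod>i\<in>barpos (nat k) S. x i) * (\<Prod>i\<in>S. y i))))"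

definition PhiJ :: "(nat \<Rightarrow> real) \<Rightarrow> (nat \<Rightarrow> real) \<Rightarrow> (nat \<Rightarrow> real) \<Rightarrow> nat \<Rightarrow> real" where
  "PhiJ a b c k =
     (if k = 0 then 1
      else b 0 * chebP (int k - 1) b (pmult a c)
           - a 0 * c 0 * chebP (int k - 2) (shiftseq 1 b) (pmult (shiftseq 1 a) (shiftseq 1 c)))"

definition PsiJ :: "nat \<Rightarrow> (nat \<Rightarrow> real) \<Rightarrow> (nat \<Rightarrow> real) \<Rightarrow> (nat \<Rightarrow> real) \<Rightarrow> nat \<Rightarrow> real" where
  "PsiJ n a b c k =
     (if k = n + 1 then 1
      else b (n + 1) * chebP (int n - int k) (shiftseq k b) (pmult (shiftseq k a) (shiftseq k c))
           - a n * c n * chebP (int n - int k - 1) (shiftseq k b) (pmult (shiftseq k a) (shiftseq k c)))"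

definition DJ :: "nat \<Rightarrow> (nat \<Rightarrow> real) \<Rightarrow> (nat \<Rightarrow> real) \<Rightarrow> (nat \<Rightarrow> real) \<Rightarrow> real" where
  "DJ n a b c =
     b 0 * (b (n + 1) * chebP (int n) b (pmult a c) - a n * c n * chebP (int n - 1) b (pmult a c))
     - a 0 * c 0 * (b (n + 1) * chebP (int n - 1) (shiftseq 1 b) (pmult (shiftseq 1 a) (shiftseq 1 c))
                    - a n * c n * chebP (int n - 2) (shiftseq 1 b) (pmult (shiftseq 1 a) (shiftseq 1 c)))"

end

theory Submission
  imports Defs
begin

text \<open>
  Splitting the gap-2 sets according to whether the last admissible position is occupied shows
  that P_k(x,y) = x(k) P_{k-1}(x,y) - y(k-1) P_{k-2}(x,y); an induction on k turns this into the
  expansion P_k(x,y) = x(1) P_{k-1}(x_1,y_1) - y(1) P_{k-2}(x_2,y_2) along the first position.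
  Hence Phi_J(k+1) = b(k) Phi_J(k) - a(k-1) c(k-1) Phi_J(k-1) and
  Psi_J(k) = b(k+1) Psi_J(k+1) - a(k+1) c(k+1) Psi_J(k+2), and rescaling by the partial products
  of a, respectively c, turns these into the given three-term equation. A solution of that equation
  is determined by two consecutive values, forwards because a(k) \<noteq> 0 and backwards because
  c(k) \<noteq> 0, which gives both closed forms; the last identity is then the definition of D_J.
\<close>

definition sparse :: "nat set \<Rightarrow> bool" where
  "sparse S \<longleftrightarrow> (\<forall>i\<in>S. \<forall>j\<in>S. i < j \<longrightarrow> 2 \<le> j - i)"

definition sparse_subsets :: "nat \<Rightarrow> nat set set" where
  "sparse_subsets k = {S. S \<subseteq> {1..<k} \<and> sparse S}"

definition cheb_sum :: "nat \<Rightarrow> (nat \<Rightarrow> real) \<Rightarrow> (nat \<Rightarrow> real) \<Rightarrow> real" where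
  "cheb_sum k x y =
     (\<Sum>S\<in>sparse_subsets k. (-1) ^ card S * (\<Prod>i\<in>barpos k S. x i) * (\<Prod>i\<in>S. y i))"

lemma finite_sparse_subsets: "finite (sparse_subsets k)"
  by (rule finite_subset[of _ "Pow {1..<k}"]) (auto simp: sparse_subsets_def)

lemma sparse_subsets_card_le:
  assumes "S \<in> sparse_subsets k"
  shows "card S \<le> k div 2"
proof -
  have S: "S \<subseteq> {1..<k}" "sparse S"
    using assms by (auto simp: sparse_subsets_def)
  then have "finite S"
    using finite_subset by blast
  have "S \<inter> Suc ` S = {}"
    using S(2) by (fastforce simp: sparse_def)
  then have "card (S \<union> Suc ` S) = 2 * card S"
    using \<open>finite S\<close> by (simp add: card_Un_disjoint card_image)
  moreover have "card (S \<union> Suc ` S) \<le> card {1..k}"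
    using S(1) by (intro card_mono) auto
  ultimately show ?thesis
    by simp
qed

lemma ell_eq_sparse_subsets: "ell k m = {S \<in> sparse_subsets k. card S = m}"
  unfolding ell_def sparse_subsets_def sparse_def by (auto simp: subset_iff le_less)

lemma chebP_eq_cheb_sum: "chebP (int k) x y = cheb_sum k x y"
proof (cases "k = 0")
  case True
  have "sparse_subsets 0 = {{}}"
    by (auto simp: sparse_subsets_def sparse_def)
  with True show ?thesis
    by (simp add: chebP_def cheb_sum_def barpos_def)
next
  case False
  let ?g = "\<lambda>S. (-1) ^ card S * (\<Prod>i\<in>barpos k S. x i) * (\<Prod>i\<in>S. y i) :: real"
  have "chebP (int k) x y = (\<Sum>m = 0..k div 2. (-1) ^ m *
          (\<Sum>S\<in>ell k m. (\<Prod>i\<in>barpos k S. x i) * (\<Prod>i\<in>S. y i)))"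
    using False by (simp add: chebP_def)
  also have "\<dots> = (\<Sum>m = 0..k div 2. \<Sum>S\<in>{S \<in> sparse_subsets k. card S = m}. ?g S)"
    by (simp add: ell_eq_sparse_subsets sum_distrib_left mult.assoc)
  also have "\<dots> = sum ?g (sparse_subsets k)"
    by (rule sum.group[OF finite_sparse_subsets]) (auto dest: sparse_subsets_card_le)
  finally show ?thesis
    by (simp add: cheb_sum_def)
qed

lemma sparse_subsets_Suc_Suc:
  "sparse_subsets (k + 2) = sparse_subsets (k + 1) \<union> insert (k + 1) ` sparse_subsets k"
proof
  show "sparse_subsets (k + 2) \<subseteq> sparse_subsets (k + 1) \<union> insert (k + 1) ` sparse_subsets k"
  proof
    fix S assume "S \<in> sparse_subsets (k + 2)"
    then have S: "S \<subseteq> {1..<k + 2}" "sparse S"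
      by (auto simp: sparse_subsets_def)
    show "S \<in> sparse_subsets (k + 1) \<union> insert (k + 1) ` sparse_subsets k"
    proof (cases "k + 1 \<in> S")
      case False
      with S have "S \<in> sparse_subsets (k + 1)"
        by (auto simp: sparse_subsets_def subset_iff less_Suc_eq)
      then show ?thesis by simp
    next
      case True
      have below: "i < k" if "i \<in> S" "i \<noteq> k + 1" for i
      proof -
        have "i < k + 1"
          using S(1) that by auto
        moreover have "i \<noteq> k"
          using S(2) True that(1) unfolding sparse_def by fastforce
        ultimately show ?thesis by simp
      qed
      have "S - {k + 1} \<subseteq> {1..<k}"
      proof
        fix i assume "i \<in> S - {k + 1}"
        then show "i \<in> {1..<k}"
          using S(1) below[of i] by auto
      qed
      with S(2) have "S - {k + 1} \<in> sparse_subsets k"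
        by (auto simp: sparse_subsets_def sparse_def)
      moreover have "S = insert (k + 1) (S - {k + 1})"
        using True by auto
      ultimately show ?thesis by blast
    qed
  qed
next
  have "insert (k + 1) S \<in> sparse_subsets (k + 2)" if "S \<in> sparse_subsets k" for S
  proof -
    have "S \<subseteq> {1..<k}" "sparse S"
      using that by (auto simp: sparse_subsets_def)
    then show ?thesis
      by (auto simp: sparse_subsets_def sparse_def subset_iff)
  qed
  then show "sparse_subsets (k + 1) \<union> insert (k + 1) ` sparse_subsets k \<subseteq> sparse_subsets (k + 2)"
    by (auto simp: sparse_subsets_def)
qed

lemma cheb_sum_Suc_Suc:
  "cheb_sum (k + 2) x y = x (k + 2) * cheb_sum (k + 1) x y - y (k + 1) * cheb_sum k x y"
proof -
  let ?g = "\<lambda>k S. (-1) ^ card S * (\<Prod>i\<in>barpos k S. x i) * (\<Prod>i\<in>S. y i) :: real"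
  have last_free: "k + 1 \<notin> S" "finite S" if "S \<in> sparse_subsets k" for S
    using that finite_subset[of S "{1..<k}"] by (auto simp: sparse_subsets_def)
  have "cheb_sum (k + 2) x y
      = sum (?g (k + 2)) (sparse_subsets (k + 1)) + sum (?g (k + 2)) (insert (k + 1) ` sparse_subsets k)"
    unfolding cheb_sum_def sparse_subsets_Suc_Suc
    by (rule sum.union_disjoint) (auto simp: finite_sparse_subsets sparse_subsets_def)
  also have "sum (?g (k + 2)) (sparse_subsets (k + 1)) = x (k + 2) * cheb_sum (k + 1) x y"
    unfolding cheb_sum_def sum_distrib_left
  proof (rule sum.cong[OF refl])
    fix S assume "S \<in> sparse_subsets (k + 1)"
    then have "barpos (k + 2) S = insert (k + 2) (barpos (k + 1) S)" "k + 2 \<notin> barpos (k + 1) S"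
      by (auto simp: barpos_def sparse_subsets_def)
    then show "?g (k + 2) S = x (k + 2) * ?g (k + 1) S"
      by (simp add: barpos_def)
  qed
  also have "sum (?g (k + 2)) (insert (k + 1) ` sparse_subsets k)
      = sum (?g (k + 2) \<circ> insert (k + 1)) (sparse_subsets k)"
  proof (rule sum.reindex, rule inj_onI)
    fix S T assume S: "S \<in> sparse_subsets k" and T: "T \<in> sparse_subsets k"
      and "insert (k + 1) S = insert (k + 1) T"
    then have "insert (k + 1) S - {k + 1} = insert (k + 1) T - {k + 1}"
      by simp
    then show "S = T"
      using last_free(1)[OF S] last_free(1)[OF T] by simp
  qed
  also have "\<dots> = - y (k + 1) * cheb_sum k x y"
    unfolding cheb_sum_def sum_distrib_left
  proof (rule sum.cong[OF refl])
    fix S assume S: "S \<in> sparse_subsets k"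
    then have "barpos (k + 2) (insert (k + 1) S) = barpos k S"
      by (auto simp: barpos_def sparse_subsets_def)
    then show "(?g (k + 2) \<circ> insert (k + 1)) S = - y (k + 1) * ?g k S"
      using last_free[OF S] by simp
  qed
  finally show ?thesis
    by simp
qed

lemma chebP_0 [simp]: "chebP 0 x y = 1"
  by (simp add: chebP_def)

lemma chebP_minus_1 [simp]: "chebP (-1) x y = 0"
  by (simp add: chebP_def)

lemma chebP_rec:
  "chebP (int m + 1) x y = x (m + 1) * chebP (int m) x y - y m * chebP (int m - 1) x y"
proof (cases m)
  case 0
  have "sparse_subsets 1 = {{}}"
    by (auto simp: sparse_subsets_def sparse_def)
  then have "chebP 1 x y = x 1"
    using chebP_eq_cheb_sum[of 1] by (simp add: cheb_sum_def barpos_def)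
  with 0 show ?thesis by simp
next
  case (Suc k)
  then show ?thesis
    using cheb_sum_Suc_Suc[of k x y] chebP_eq_cheb_sum[of "k + 2"] chebP_eq_cheb_sum[of "k + 1"]
      chebP_eq_cheb_sum[of k]
    by (simp add: algebra_simps eval_nat_numeral)
qed

lemma chebP_1 [simp]: "chebP 1 x y = x 1"
  using chebP_rec[of 0 x y] by simp

lemma shiftseq_shiftseq [simp]: "shiftseq m (shiftseq k x) = shiftseq (k + m) x"
  by (simp add: shiftseq_def algebra_simps)

lemma shiftseq_0 [simp]: "shiftseq 0 x = x"
  by (simp add: shiftseq_def)

lemma shiftseq_apply: "shiftseq m x j = x (j + m)"
  by (simp add: shiftseq_def)

lemma pmult_shiftseq [simp]: "pmult (shiftseq k a) (shiftseq k c) = shiftseq k (pmult a c)"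
  by (simp add: shiftseq_def pmult_def)

lemma pmult_apply [simp]: "pmult a c j = a j * c j"
  by (simp add: pmult_def)

lemma chebP_shift_rec:
  "chebP (int m + 1) x y =
     x 1 * chebP (int m) (shiftseq 1 x) (shiftseq 1 y)
     - y 1 * chebP (int m - 1) (shiftseq 2 x) (shiftseq 2 y)"
proof (induction m rule: induct_nat_012)
  case 0
  then show ?case by simp
next
  case 1
  then show ?case
    using chebP_rec[of 1 x y] by (simp add: numeral_2_eq_2 shiftseq_apply)
next
  case (ge2 m)
  let ?x1 = "shiftseq 1 x" and ?y1 = "shiftseq 1 y" and ?x2 = "shiftseq 2 x" and ?y2 = "shiftseq 2 y"
  have R0: "chebP (int m + 3) x y =
      x (m + 3) * chebP (int m + 2) x y - y (m + 2) * chebP (int m + 1) x y"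
    using chebP_rec[of "m + 2" x y] by (simp add: algebra_simps eval_nat_numeral)
  have R1: "chebP (int m + 2) ?x1 ?y1 =
      x (m + 3) * chebP (int m + 1) ?x1 ?y1 - y (m + 2) * chebP (int m) ?x1 ?y1"
    using chebP_rec[of "m + 1" ?x1 ?y1] by (simp add: algebra_simps eval_nat_numeral shiftseq_apply)
  have R2: "chebP (int m + 1) ?x2 ?y2 =
      x (m + 3) * chebP (int m) ?x2 ?y2 - y (m + 2) * chebP (int m - 1) ?x2 ?y2"
    using chebP_rec[of m ?x2 ?y2] by (simp add: algebra_simps eval_nat_numeral shiftseq_apply)
  have IH2: "chebP (int m + 2) x y = x 1 * chebP (int m + 1) ?x1 ?y1 - y 1 * chebP (int m) ?x2 ?y2"
    using ge2.IH(2) by (simp add: algebra_simps)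
  have "chebP (int m + 3) x y = x 1 * chebP (int m + 2) ?x1 ?y1 - y 1 * chebP (int m + 1) ?x2 ?y2"
    by (simp only: R0 R1 R2 IH2 ge2.IH(1)) (simp add: algebra_simps)
  then show ?case
    by (simp add: algebra_simps)
qed

lemma PhiJ_rec: "PhiJ a b c (k + 2) = b (k + 1) * PhiJ a b c (k + 1) - a k * c k * PhiJ a b c k"
proof (cases k)
  case 0
  then show ?thesis
    by (simp add: PhiJ_def)
next
  case (Suc j)
  let ?y = "pmult a c" and ?b1 = "shiftseq 1 b" and ?y1 = "shiftseq 1 (pmult a c)"
  have P3: "PhiJ a b c (j + 3) = b 0 * chebP (int j + 2) b ?y - a 0 * c 0 * chebP (int j + 1) ?b1 ?y1"
    and P2: "PhiJ a b c (j + 2) = b 0 * chebP (int j + 1) b ?y - a 0 * c 0 * chebP (int j) ?b1 ?y1"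
    and P1: "PhiJ a b c (j + 1) = b 0 * chebP (int j) b ?y - a 0 * c 0 * chebP (int j - 1) ?b1 ?y1"
    by (simp_all add: PhiJ_def algebra_simps)
  have R1: "chebP (int j + 2) b ?y =
      b (j + 2) * chebP (int j + 1) b ?y - a (j + 1) * c (j + 1) * chebP (int j) b ?y"
    using chebP_rec[of "j + 1" b ?y] by (simp add: algebra_simps eval_nat_numeral)
  have R2: "chebP (int j + 1) ?b1 ?y1 =
      b (j + 2) * chebP (int j) ?b1 ?y1 - a (j + 1) * c (j + 1) * chebP (int j - 1) ?b1 ?y1"
    using chebP_rec[of j ?b1 ?y1] by (simp add: algebra_simps eval_nat_numeral shiftseq_apply)
  have "PhiJ a b c (j + 3) =
      b (j + 2) * PhiJ a b c (j + 2) - a (j + 1) * c (j + 1) * PhiJ a b c (j + 1)"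
    by (simp only: P1 P2 P3 R1 R2) (simp add: algebra_simps)
  with Suc show ?thesis
    by (simp add: eval_nat_numeral)
qed

lemma PsiJ_rec:
  assumes "k < n"
  shows "PsiJ n a b c k = b (k + 1) * PsiJ n a b c (k + 1) - a (k + 1) * c (k + 1) * PsiJ n a b c (k + 2)"
proof -
  let ?y = "pmult a c"
  obtain m where n: "n = k + m + 1"
    using assms less_imp_Suc_add by fastforce
  show ?thesis
  proof (cases m)
    case 0
    then show ?thesis
      by (simp add: n PsiJ_def shiftseq_apply)
  next
    case (Suc j)
    have n': "n = k + j + 2"
      using n Suc by simp
    have P0: "PsiJ n a b c k = b (n + 1) * chebP (int j + 2) (shiftseq k b) (shiftseq k ?y)
        - a n * c n * chebP (int j + 1) (shiftseq k b) (shiftseq k ?y)"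
      and P1: "PsiJ n a b c (k + 1) = b (n + 1) * chebP (int j + 1) (shiftseq (k + 1) b) (shiftseq (k + 1) ?y)
        - a n * c n * chebP (int j) (shiftseq (k + 1) b) (shiftseq (k + 1) ?y)"
      and P2: "PsiJ n a b c (k + 2) = b (n + 1) * chebP (int j) (shiftseq (k + 2) b) (shiftseq (k + 2) ?y)
        - a n * c n * chebP (int j - 1) (shiftseq (k + 2) b) (shiftseq (k + 2) ?y)"
      by (simp_all add: n' PsiJ_def algebra_simps)
    have L1: "chebP (int j + 2) (shiftseq k b) (shiftseq k ?y) =
        b (k + 1) * chebP (int j + 1) (shiftseq (k + 1) b) (shiftseq (k + 1) ?y)
        - a (k + 1) * c (k + 1) * chebP (int j) (shiftseq (k + 2) b) (shiftseq (k + 2) ?y)"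
      using chebP_shift_rec[of "j + 1" "shiftseq k b" "shiftseq k ?y"]
      by (simp add: algebra_simps shiftseq_apply)
    have L2: "chebP (int j + 1) (shiftseq k b) (shiftseq k ?y) =
        b (k + 1) * chebP (int j) (shiftseq (k + 1) b) (shiftseq (k + 1) ?y)
        - a (k + 1) * c (k + 1) * chebP (int j - 1) (shiftseq (k + 2) b) (shiftseq (k + 2) ?y)"
      using chebP_shift_rec[of j "shiftseq k b" "shiftseq k ?y"]
      by (simp add: algebra_simps shiftseq_apply)
    show ?thesis
      by (simp only: P0 P1 P2 L1 L2) (simp add: algebra_simps)
  qed
qed

definition jacobi_solution ::
    "nat \<Rightarrow> (nat \<Rightarrow> real) \<Rightarrow> (nat \<Rightarrow> real) \<Rightarrow> (nat \<Rightarrow> real) \<Rightarrow> (nat \<Rightarrow> real) \<Rightarrow> bool" where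
  "jacobi_solution n a b c u \<longleftrightarrow>
     (\<forall>k. 1 \<le> k \<longrightarrow> k \<le> n \<longrightarrow> - a k * u (k + 1) + b k * u k - c (k - 1) * u (k - 1) = 0)"

lemma jacobi_solutionD:
  "jacobi_solution n a b c u \<Longrightarrow> k < n \<Longrightarrow> - a (k + 1) * u (k + 2) + b (k + 1) * u (k + 1) - c k * u k = 0"
  unfolding jacobi_solution_def by (drule spec[of _ "k + 1"]) (simp add: eval_nat_numeral)

lemma jacobi_solution_eq_forward:
  assumes u: "jacobi_solution n a b c u" and v: "jacobi_solution n a b c v"
    and a: "\<And>k. 1 \<le> k \<Longrightarrow> k \<le> n \<Longrightarrow> a k \<noteq> 0"
    and "u 0 = v 0" "u 1 = v 1" "k \<le> n + 1"
  shows "u k = v k"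
proof -
  have "u k = v k \<and> u (k + 1) = v (k + 1)" if "k \<le> n" for k
    using that
  proof (induction k)
    case 0
    then show ?case using assms by simp
  next
    case (Suc k)
    then have "u k = v k" "u (k + 1) = v (k + 1)" "k < n"
      by simp_all
    with jacobi_solutionD[OF u] jacobi_solutionD[OF v]
    have "a (k + 1) * (u (k + 2) - v (k + 2)) = 0"
      by (fastforce simp: algebra_simps)
    with a[of "k + 1"] \<open>u (k + 1) = v (k + 1)\<close> \<open>k < n\<close> show ?case
      by (simp add: eval_nat_numeral)
  qed
  with \<open>k \<le> n + 1\<close> show ?thesis
    by (cases "k = n + 1") auto
qed

lemma jacobi_solution_eq_backward:
  assumes u: "jacobi_solution n a b c u" and v: "jacobi_solution n a b c v"
    and c: "\<And>k. k < n \<Longrightarrow> c k \<noteq> 0"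
    and "u n = v n" "u (n + 1) = v (n + 1)" "k \<le> n + 1"
  shows "u k = v k"
proof -
  have "u k = v k \<and> u (k + 1) = v (k + 1)" if "k \<le> n" for k
    using that
  proof (induction k rule: inc_induct)
    case base
    then show ?case using assms by simp
  next
    case (step k)
    then have "u (k + 1) = v (k + 1)" "u (k + 2) = v (k + 2)"
      by (simp_all add: eval_nat_numeral)
    with jacobi_solutionD[OF u \<open>k < n\<close>] jacobi_solutionD[OF v \<open>k < n\<close>]
    have "c k * (u k - v k) = 0"
      by (auto simp: algebra_simps)
    with c[OF \<open>k < n\<close>] \<open>u (k + 1) = v (k + 1)\<close> show ?case
      by simp
  qed
  with \<open>k \<le> n + 1\<close> show ?thesis
    by (cases "k = n + 1") auto
qed

definition PhiJ_rescaled :: "(nat \<Rightarrow> real) \<Rightarrow> (nat \<Rightarrow> real) \<Rightarrow> (nat \<Rightarrow> real) \<Rightarrow> nat \<Rightarrow> real" where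
  "PhiJ_rescaled a b c k = a 0 * inverse (\<Prod>s<k. a s) * PhiJ a b c k"

definition PsiJ_rescaled ::
    "nat \<Rightarrow> (nat \<Rightarrow> real) \<Rightarrow> (nat \<Rightarrow> real) \<Rightarrow> (nat \<Rightarrow> real) \<Rightarrow> nat \<Rightarrow> real" where
  "PsiJ_rescaled n a b c k = c n * inverse (\<Prod>s\<in>{k..n}. c s) * PsiJ n a b c k"

lemma jacobi_solution_PhiJ_rescaled:
  assumes "\<And>k. k \<le> n \<Longrightarrow> a k \<noteq> 0"
  shows "jacobi_solution n a b c (PhiJ_rescaled a b c)"
  unfolding jacobi_solution_def PhiJ_rescaled_def
proof (intro allI impI)
  fix k assume "1 \<le> k" "k \<le> n"
  define j where "j = k - 1"
  have k: "k = j + 1"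
    using \<open>1 \<le> k\<close> by (simp add: j_def)
  have rec: "PhiJ a b c (Suc (Suc j)) = b (Suc j) * PhiJ a b c (Suc j) - a j * c j * PhiJ a b c j"
    using PhiJ_rec[of a b c j] by (simp add: eval_nat_numeral)
  have nz: "(\<Prod>s<j. a s) \<noteq> 0" "a j \<noteq> 0" "a (j + 1) \<noteq> 0"
    using assms \<open>k \<le> n\<close> k by (simp_all add: prod_zero_iff)
  show "- a k * (a 0 * inverse (\<Prod>s<k + 1. a s) * PhiJ a b c (k + 1))
      + b k * (a 0 * inverse (\<Prod>s<k. a s) * PhiJ a b c k)
      - c (k - 1) * (a 0 * inverse (\<Prod>s<k - 1. a s) * PhiJ a b c (k - 1)) = 0"
    using nz unfolding k by (simp add: rec field_simps)
qed

lemma jacobi_solution_PsiJ_rescaled: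
  assumes "\<And>k. k \<le> n \<Longrightarrow> c k \<noteq> 0"
  shows "jacobi_solution n a b c (PsiJ_rescaled n a b c)"
  unfolding jacobi_solution_def PsiJ_rescaled_def
proof (intro allI impI)
  fix k assume "1 \<le> k" "k \<le> n"
  define j where "j = k - 1"
  have k: "k = j + 1"
    using \<open>1 \<le> k\<close> by (simp add: j_def)
  have split: "(\<Prod>s\<in>{j..n}. c s) = c j * c (Suc j) * (\<Prod>s\<in>{Suc (Suc j)..n}. c s)"
    "(\<Prod>s\<in>{Suc j..n}. c s) = c (Suc j) * (\<Prod>s\<in>{Suc (Suc j)..n}. c s)"
    using \<open>k \<le> n\<close> k by (simp_all add: prod.atLeast_Suc_atMost eval_nat_numeral)
  have rec: "PsiJ n a b c j =
      b (Suc j) * PsiJ n a b c (Suc j) - a (Suc j) * c (Suc j) * PsiJ n a b c (Suc (Suc j))"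
    using PsiJ_rec[of j n a b c] \<open>k \<le> n\<close> k by (simp add: eval_nat_numeral)
  have nz: "(\<Prod>s\<in>{Suc (Suc j)..n}. c s) \<noteq> 0" "c j \<noteq> 0" "c (j + 1) \<noteq> 0"
    using assms \<open>k \<le> n\<close> k by (simp_all add: prod_zero_iff)
  show "- a k * (c n * inverse (\<Prod>s\<in>{k + 1..n}. c s) * PsiJ n a b c (k + 1))
      + b k * (c n * inverse (\<Prod>s\<in>{k..n}. c s) * PsiJ n a b c k)
      - c (k - 1) * (c n * inverse (\<Prod>s\<in>{k - 1..n}. c s) * PsiJ n a b c (k - 1)) = 0"
    using nz unfolding k by (simp add: split rec field_simps)
qed

lemma DJ_eq_PsiJ:
  assumes "1 \<le> n"
  shows "DJ n a b c = b 0 * PsiJ n a b c 0 - a 0 * c 0 * PsiJ n a b c 1"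
  using assms by (simp add: DJ_def PsiJ_def algebra_simps)

lemma PsiJ_rescaled_boundary:
  assumes "1 \<le> n" and "\<And>k. k \<le> n \<Longrightarrow> c k \<noteq> 0"
  shows "b 0 * PsiJ_rescaled n a b c 0 - a 0 * PsiJ_rescaled n a b c 1
    = DJ n a b c * inverse (\<Prod>s<n. c s)"
proof -
  have p0: "(\<Prod>s\<in>{0..n}. c s) = (\<Prod>s<n. c s) * c n"
    by (simp add: atLeast0AtMost lessThan_Suc_atMost[symmetric])
  have p1: "(\<Prod>s\<in>{1..n}. c s) = (\<Prod>s\<in>{1..<n}. c s) * c n"
    using assms(1)
    by (simp add: prod.atLeastLessThan_Suc atLeastLessThanSuc_atLeastAtMost[symmetric])
  have p2: "(\<Prod>s<n. c s) = c 0 * (\<Prod>s\<in>{1..<n}. c s)"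
    using assms(1)
    by (simp add: prod.atLeast0_lessThan_Suc_shift lessThan_atLeast0 prod.atLeast_Suc_lessThan)
  have "(\<Prod>s\<in>{1..<n}. c s) \<noteq> 0" "c n \<noteq> 0" "c 0 \<noteq> 0"
    using assms(2) by (auto simp: prod_zero_iff)
  then show ?thesis
    unfolding PsiJ_rescaled_def DJ_eq_PsiJ[OF assms(1)] p0 p1 p2 by (simp add: field_simps)
qed

theorem lemma4p1:
  fixes n :: nat and a b c Phi Psi :: "nat \<Rightarrow> real"
  assumes "n \<ge> 1"
    and "\<And>k. k \<le> n \<Longrightarrow> a k \<noteq> 0"
    and "\<And>k. k \<le> n \<Longrightarrow> c k \<noteq> 0"
    and Phi_eq: "\<And>k. 1 \<le> k \<Longrightarrow> k \<le> n \<Longrightarrow>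
                   - a k * Phi (k + 1) + b k * Phi k - c (k - 1) * Phi (k - 1) = 0"
    and "Phi 0 = a 0" and "Phi 1 = b 0"
    and Psi_eq: "\<And>k. 1 \<le> k \<Longrightarrow> k \<le> n \<Longrightarrow>
                   - a k * Psi (k + 1) + b k * Psi k - c (k - 1) * Psi (k - 1) = 0"
    and "Psi n = b (n + 1)" and "Psi (n + 1) = c n"
  shows "(\<forall>k \<le> n + 1.
            Phi k = a 0 * inverse (\<Prod>s<k. a s) * PhiJ a b c k \<and>
            Psi k = c n * inverse (\<Prod>s\<in>{k..n}. c s) * PsiJ n a b c k)
         \<and> b 0 * Psi 0 - a 0 * Psi 1 = DJ n a b c * inverse (\<Prod>s<n. c s)"
proof -
  have Phi: "Phi k = PhiJ_rescaled a b c k" if "k \<le> n + 1" for k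
  proof (rule jacobi_solution_eq_forward)
    show "jacobi_solution n a b c Phi"
      using Phi_eq by (simp add: jacobi_solution_def)
    show "jacobi_solution n a b c (PhiJ_rescaled a b c)"
      using assms(2) by (rule jacobi_solution_PhiJ_rescaled)
  qed (use assms that in \<open>simp_all add: PhiJ_rescaled_def PhiJ_def\<close>)
  have Psi: "Psi k = PsiJ_rescaled n a b c k" if "k \<le> n + 1" for k
  proof (rule jacobi_solution_eq_backward)
    show "jacobi_solution n a b c Psi"
      using Psi_eq by (simp add: jacobi_solution_def)
    show "jacobi_solution n a b c (PsiJ_rescaled n a b c)"
      using assms(3) by (rule jacobi_solution_PsiJ_rescaled)
  qed (use assms that in \<open>simp_all add: PsiJ_rescaled_def PsiJ_def\<close>)
  show ?thesis
    using Phi Psi PsiJ_rescaled_boundary[OF assms(1,3)]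
    by (simp add: PhiJ_rescaled_def PsiJ_rescaled_def)
qed

end
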